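(* For $t>0$ and $n,k\in\mathbb{Z}$ let $v=|n-k|/t$, $\phi_v(\theta)=2-2\cos\theta+v\theta$, and $$[K(t)]_{n,k}=\int_{|\theta+\frac{\pi}{2}|\le\frac{\pi}{6}}\mathrm{e}^{-\mathrm{i}t\phi_v(\theta)}\,d\theta .$$ Then for every $\sigma>1/2$ there is $C>0$ such that for all $t\ge1$ $$\sum_{n,k\in\mathbb{Z}}\big|[K(t)]_{n,k}\big|^2\frac{1}{(1+|n|)^{2\sigma}(1+|k|)^{2\sigma}}\le Ct^{-1}.$$ *)

theory Defs
  imports "HOL-Analysis.Analysis"
begin

definition phi :: "real \<Rightarrow> real \<Rightarrow> real" where
  "phi v \<theta> = 2 - 2 * cos \<theta> + v * \<theta>"

definition Kmat :: "real \<Rightarrow> int \<Rightarrow> int \<Rightarrow> complex" where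
  "Kmat t n k = (let v = real_of_int \<bar>n - k\<bar> / t in
     integral {\<theta>. \<bar>\<theta> + pi/2\<bar> \<le> pi/6}
       (\<lambda>\<theta>. exp (- \<i> * complex_of_real (t * phi v \<theta>))))"

definition wterm :: "real \<Rightarrow> real \<Rightarrow> int \<times> int \<Rightarrow> real" where
  "wterm \<sigma> t nk = (case nk of (n, k) \<Rightarrow>
     (cmod (Kmat t n k))^2 / ((1 + real_of_int \<bar>n\<bar>) powr (2*\<sigma>) * (1 + real_of_int \<bar>k\<bar>) powr (2*\<sigma>)))"

end

theory Submission
  imports Defs
begin

text \<open>The entry [K(t)]_{n,k} depends only on m = |n - k|: it is the m-th Fourier coefficient of the
  unimodular function e^{-it(2 - 2 cos \<theta>)} restricted to an arc of length pi/3, so Bessel's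
  inequality bounds \<Sum>_m |K_m|^2 by 2 pi * pi/3 uniformly in t. If |n - k| \<le> t/2, the derivative
  2 sin \<theta> + v of the phase stays below -1 on the arc and one integration by parts gives
  |K| \<le> 5/t. Otherwise max(|n|, |k|) > t/4, so the weight of that index is at most 4/t, and the
  row and column bound on |K|^2 together with the summability of the weights (2\<sigma> > 1) again
  yields O(1/t).\<close>

lemma has_integral_exp_int_multiple:
  fixes k :: int
  shows "((\<lambda>\<theta>::real. exp (\<i> * of_int k * of_real \<theta>)) has_integral (if k = 0 then 2 * pi else 0)) {-pi..pi}"
proof (cases "k = 0")
  case True
  then show ?thesis
    using has_integral_const_real[of "1::complex" "-pi" pi] by (simp add: scaleR_conv_of_real)
next
  case False
  define F where "F z = exp (\<i> * of_int k * z) / (\<i> * of_int k)" for z :: complex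
  have "((\<lambda>\<theta>::real. exp (\<i> * of_int k * of_real \<theta>)) has_integral F pi - F (- pi)) {-pi..pi}"
  proof (rule fundamental_theorem_of_calculus)
    fix x :: real
    have "(F has_field_derivative exp (\<i> * of_int k * of_real x)) (at (of_real x))"
      unfolding F_def using False by (auto intro!: derivative_eq_intros)
    then show "((\<lambda>x. F (of_real x)) has_vector_derivative exp (\<i> * of_int k * of_real x)) (at x within {-pi..pi})"
      by (rule has_vector_derivative_real_field)
  qed simp
  moreover have "F pi = F (- pi)"
  proof -
    have "exp (\<i> * of_int k * of_real pi)
        = exp (\<i> * of_int k * of_real (- pi) + \<i> * (of_int k * (of_real pi * 2)))"
      by (simp add: algebra_simps)
    also have "\<dots> = exp (\<i> * of_int k * of_real (- pi))"
      by (rule exp_plus_2pin)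
    finally show ?thesis
      unfolding F_def by simp
  qed
  ultimately show ?thesis
    using False by simp
qed

lemma parseval_trig_poly:
  fixes c :: "nat \<Rightarrow> complex"
  assumes "finite J"
  shows "((\<lambda>\<theta>::real. (cmod (\<Sum>j\<in>J. c j * exp (\<i> * of_nat j * of_real \<theta>)))\<^sup>2)
           has_integral 2 * pi * (\<Sum>j\<in>J. (cmod (c j))\<^sup>2)) {-pi..pi}"
proof -
  define e where "e j \<theta> = exp (\<i> * of_nat j * of_real \<theta>)" for j and \<theta> :: real
  have e_orth: "((\<lambda>\<theta>. e j \<theta> * cnj (e l \<theta>)) has_integral (if j = l then 2 * pi else 0)) {-pi..pi}" for j l
  proof -
    have "e j \<theta> * cnj (e l \<theta>) = exp (\<i> * of_int (int j - int l) * of_real \<theta>)" for \<theta>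
      unfolding e_def by (simp add: exp_cnj exp_add[symmetric] algebra_simps)
    then show ?thesis
      using has_integral_exp_int_multiple[of "int j - int l"] by simp
  qed
  have square: "(\<Sum>j\<in>J. c j * e j \<theta>) * cnj (\<Sum>j\<in>J. c j * e j \<theta>)
      = (\<Sum>j\<in>J. \<Sum>l\<in>J. (c j * cnj (c l)) * (e j \<theta> * cnj (e l \<theta>)))" for \<theta>
    by (simp add: cnj_sum sum_product algebra_simps)
  have "((\<lambda>\<theta>. \<Sum>j\<in>J. \<Sum>l\<in>J. (c j * cnj (c l)) * (e j \<theta> * cnj (e l \<theta>))) has_integral
      (\<Sum>j\<in>J. \<Sum>l\<in>J. (c j * cnj (c l)) * (if j = l then 2 * pi else 0))) {-pi..pi}"
    using assms by (intro has_integral_sum has_integral_mult_right e_orth) auto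
  moreover have "(\<Sum>j\<in>J. \<Sum>l\<in>J. (c j * cnj (c l)) * (if j = l then 2 * pi else 0))
      = of_real (2 * pi * (\<Sum>j\<in>J. (cmod (c j))\<^sup>2))"
    using assms by (simp add: if_distrib sum.delta complex_norm_square[symmetric] sum_distrib_left
        algebra_simps del: of_real_power cong: if_cong)
  ultimately have "((\<lambda>\<theta>. (\<Sum>j\<in>J. c j * e j \<theta>) * cnj (\<Sum>j\<in>J. c j * e j \<theta>))
      has_integral of_real (2 * pi * (\<Sum>j\<in>J. (cmod (c j))\<^sup>2))) {-pi..pi}"
    unfolding square by simp
  note Re_integral = has_integral_Re[OF this]
  have Re_mult_cnj: "Re (z * cnj z) = (cmod z)\<^sup>2" for z
    by (metis Re_complex_of_real complex_norm_square)
  show ?thesis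
    using Re_integral unfolding Re_mult_cnj Re_complex_of_real e_def .
qed

lemma bessel_inequality_interval:
  fixes g :: "real \<Rightarrow> complex"
  assumes J: "finite J" and g_cont: "continuous_on {a..b} g" and g_norm: "\<And>\<theta>. cmod (g \<theta>) \<le> 1"
    and ab: "-pi \<le> a" "a \<le> b" "b \<le> pi"
  shows "(\<Sum>j\<in>J. (cmod (integral {a..b} (\<lambda>\<theta>. g \<theta> * cnj (exp (\<i> * of_nat j * of_real \<theta>)))))\<^sup>2)
           \<le> 2 * pi * (b - a)"
proof -
  define e where "e j \<theta> = exp (\<i> * of_nat j * of_real \<theta>)" for j and \<theta> :: real
  define c where "c j = integral {a..b} (\<lambda>\<theta>. g \<theta> * cnj (e j \<theta>))" for j
  define X where "X = (\<Sum>j\<in>J. (cmod (c j))\<^sup>2)"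
  define P where "P \<theta> = (\<Sum>j\<in>J. c j * e j \<theta>)" for \<theta>
  have P_cont: "continuous_on S P" for S
    unfolding P_def e_def by (intro continuous_intros)
  have "((\<lambda>\<theta>. g \<theta> * cnj (e j \<theta>)) has_integral c j) {a..b}" for j
    unfolding c_def e_def by (intro integrable_integral integrable_continuous_interval continuous_intros g_cont)
  then have "((\<lambda>\<theta>. \<Sum>j\<in>J. cnj (c j) * (g \<theta> * cnj (e j \<theta>))) has_integral (\<Sum>j\<in>J. cnj (c j) * c j)) {a..b}"
    using J by (intro has_integral_sum has_integral_mult_right)
  moreover have "(\<Sum>j\<in>J. cnj (c j) * (g \<theta> * cnj (e j \<theta>))) = g \<theta> * cnj (P \<theta>)" for \<theta>
    unfolding P_def by (simp add: cnj_sum sum_distrib_left algebra_simps)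
  moreover have "(\<Sum>j\<in>J. cnj (c j) * c j) = of_real X"
    unfolding X_def of_real_sum by (metis complex_norm_square mult.commute)
  ultimately have "((\<lambda>\<theta>. g \<theta> * cnj (P \<theta>)) has_integral of_real X) {a..b}"
    by simp
  from has_integral_Re[OF this]
  have inner: "((\<lambda>\<theta>. Re (g \<theta> * cnj (P \<theta>))) has_integral X) {a..b}"
    by simp
  have P_sq_int: "(\<lambda>\<theta>. (cmod (P \<theta>))\<^sup>2) integrable_on {u..v}" for u v
    by (intro integrable_continuous_interval continuous_intros P_cont)
  have "integral {a..b} (\<lambda>\<theta>. (cmod (P \<theta>))\<^sup>2) \<le> integral {-pi..pi} (\<lambda>\<theta>. (cmod (P \<theta>))\<^sup>2)"
    using ab by (intro integral_subset_le P_sq_int) auto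
  also have "\<dots> = 2 * pi * X"
    using parseval_trig_poly[OF J, of c] unfolding P_def e_def X_def by (simp add: integral_unique)
  finally have P_sq: "integral {a..b} (\<lambda>\<theta>. (cmod (P \<theta>))\<^sup>2) \<le> 2 * pi * X" .
  define L where "L = 1 / (2 * pi)"
  \<comment> \<open>L * P is the orthogonal projection of g onto the span of the e j; expand the squared
    distance from g to it.\<close>
  have expand: "(cmod (g \<theta> - of_real L * P \<theta>))\<^sup>2 \<le> 1 - 2 * L * Re (g \<theta> * cnj (P \<theta>)) + L\<^sup>2 * (cmod (P \<theta>))\<^sup>2"
    for \<theta>
  proof -
    have "(cmod (g \<theta>))\<^sup>2 \<le> 1"
      using g_norm[of \<theta>] by (simp add: power_le_one)
    moreover have "(cmod (g \<theta> - of_real L * P \<theta>))\<^sup>2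
        = (cmod (g \<theta>))\<^sup>2 - 2 * L * Re (g \<theta> * cnj (P \<theta>)) + L\<^sup>2 * (cmod (P \<theta>))\<^sup>2"
      unfolding cmod_power2 by (simp add: power2_eq_square algebra_simps)
    ultimately show ?thesis
      by linarith
  qed
  have "((\<lambda>\<theta>. 1 - 2 * L * Re (g \<theta> * cnj (P \<theta>)) + L\<^sup>2 * (cmod (P \<theta>))\<^sup>2) has_integral
      (b - a) - 2 * L * X + L\<^sup>2 * integral {a..b} (\<lambda>\<theta>. (cmod (P \<theta>))\<^sup>2)) {a..b}"
    using ab has_integral_const_real[of "1::real" a b]
    by (intro has_integral_add has_integral_diff has_integral_mult_right inner integrable_integral P_sq_int) auto
  then have "0 \<le> (b - a) - 2 * L * X + L\<^sup>2 * integral {a..b} (\<lambda>\<theta>. (cmod (P \<theta>))\<^sup>2)"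
    by (rule has_integral_nonneg) (meson expand order_trans zero_le_power2)
  also have "\<dots> \<le> (b - a) - 2 * L * X + L\<^sup>2 * (2 * pi * X)"
    using P_sq by (intro add_left_mono mult_left_mono) auto
  also have "\<dots> = (b - a) - X / (2 * pi)"
    unfolding L_def by (simp add: field_simps power2_eq_square)
  finally show ?thesis
    unfolding X_def c_def e_def by (simp add: field_simps)
qed

lemma has_vector_derivative_exp_i_real:
  assumes "(\<psi> has_real_derivative d) (at x)"
  shows "((\<lambda>x. exp (\<i> * of_real (\<psi> x))) has_vector_derivative
           \<i> * of_real d * exp (\<i> * of_real (\<psi> x))) (at x)"
proof -
  have "((\<lambda>z. exp (\<i> * z)) \<circ> (\<lambda>x. of_real (\<psi> x)) has_vector_derivative
      of_real d * (\<i> * exp (\<i> * of_real (\<psi> x)))) (at x)"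
    by (rule field_vector_diff_chain_at) (auto intro!: derivative_eq_intros assms)
  then show ?thesis by (simp add: o_def algebra_simps)
qed

lemma oscillatory_integral_bound:
  fixes \<psi> \<psi>' \<psi>'' :: "real \<Rightarrow> real"
  assumes ab: "a \<le> b" and t: "t > 0" and c: "c > 0"
    and \<psi>: "\<And>x. x \<in> {a..b} \<Longrightarrow> (\<psi> has_real_derivative \<psi>' x) (at x)"
    and \<psi>': "\<And>x. x \<in> {a..b} \<Longrightarrow> (\<psi>' has_real_derivative \<psi>'' x) (at x)"
    and \<psi>''_cont: "continuous_on {a..b} \<psi>''"
    and lower: "\<And>x. x \<in> {a..b} \<Longrightarrow> c \<le> \<bar>\<psi>' x\<bar>"
    and upper: "\<And>x. x \<in> {a..b} \<Longrightarrow> \<bar>\<psi>'' x\<bar> \<le> M"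
  shows "norm (integral {a..b} (\<lambda>x. exp (\<i> * of_real (t * \<psi> x))))
           \<le> (2 / c + M * (b - a) / c\<^sup>2) / t"
proof -
  \<comment> \<open>Integration by parts: F = E / (\<i> t \<psi>') is an antiderivative of E up to the remainder R,
    and both F and R are O(1/t).\<close>
  define E where "E x = exp (\<i> * of_real (t * \<psi> x))" for x
  define F where "F x = E x * (- \<i> * of_real (1 / (t * \<psi>' x)))" for x
  define R where "R x = E x * (\<i> * of_real (\<psi>'' x / (t * (\<psi>' x)\<^sup>2)))" for x
  have nz: "\<psi>' x \<noteq> 0" if "x \<in> {a..b}" for x
    using lower[OF that] c by auto
  have F': "(F has_vector_derivative E x + R x) (at x)" if x: "x \<in> {a..b}" for x
  proof -
    have dE: "(E has_vector_derivative \<i> * of_real (t * \<psi>' x) * E x) (at x)"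
      unfolding E_def by (rule has_vector_derivative_exp_i_real) (auto intro!: derivative_eq_intros \<psi> x)
    have "((\<lambda>x. 1 / (t * \<psi>' x)) has_real_derivative - (t * \<psi>'' x) / (t * \<psi>' x)\<^sup>2) (at x)"
      using nz[OF x] t by (auto intro!: derivative_eq_intros \<psi>' x simp: power2_eq_square)
    from has_vector_derivative_mult_right[OF has_vector_derivative_of_real[OF this], of "- \<i>"]
    have "(F has_vector_derivative E x * (- \<i> * of_real (- (t * \<psi>'' x) / (t * \<psi>' x)\<^sup>2))
        + \<i> * of_real (t * \<psi>' x) * E x * (- \<i> * of_real (1 / (t * \<psi>' x)))) (at x)"
      unfolding F_def by (rule has_vector_derivative_mult[OF dE])
    moreover have "E x * (- \<i> * of_real (- (t * \<psi>'' x) / (t * \<psi>' x)\<^sup>2))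
        + \<i> * of_real (t * \<psi>' x) * E x * (- \<i> * of_real (1 / (t * \<psi>' x))) = E x + R x"
      unfolding R_def using nz[OF x] t by (simp add: field_simps power2_eq_square)
    ultimately show ?thesis by simp
  qed
  have cont: "continuous_on {a..b} \<psi>" "continuous_on {a..b} \<psi>'"
    using \<psi> \<psi>' by (meson DERIV_isCont continuous_at_imp_continuous_on)+
  have R_int: "R integrable_on {a..b}"
    unfolding R_def E_def using nz t
    by (intro integrable_continuous_interval continuous_intros cont \<psi>''_cont) auto
  have "((\<lambda>x. E x + R x) has_integral F b - F a) {a..b}"
    by (rule fundamental_theorem_of_calculus[OF ab]) (simp add: has_vector_derivative_at_within F')
  from has_integral_diff[OF this integrable_integral[OF R_int]]
  have integral_E: "integral {a..b} E = (F b - F a) - integral {a..b} R"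
    by (simp add: integral_unique)
  have normE: "norm (E x) = 1" for x
    unfolding E_def by simp
  have F_bound: "norm (F x) \<le> 1 / (t * c)" if "x \<in> {a..b}" for x
  proof -
    have "norm (F x) = 1 / (t * \<bar>\<psi>' x\<bar>)"
      unfolding F_def norm_mult normE using t by (simp add: norm_divide norm_mult norm_power abs_mult)
    also have "\<dots> \<le> 1 / (t * c)"
      using lower[OF that] t c by (simp add: frac_le)
    finally show ?thesis .
  qed
  have R_bound: "norm (R x) \<le> M / (t * c\<^sup>2)" if "x \<in> {a..b}" for x
  proof -
    have "c\<^sup>2 \<le> (\<psi>' x)\<^sup>2"
      using lower[OF that] c by (metis abs_le_square_iff abs_of_pos less_imp_le)
    moreover have "norm (R x) = \<bar>\<psi>'' x\<bar> / (t * (\<psi>' x)\<^sup>2)"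
      unfolding R_def norm_mult normE using t by (simp add: norm_divide norm_mult norm_power abs_mult)
    ultimately show ?thesis
      using upper[OF that] t c by (simp add: frac_le)
  qed
  have "0 \<le> M"
    using upper[of a] ab by fastforce
  then have "norm (integral {a..b} R) \<le> M / (t * c\<^sup>2) * (b - a)"
    using has_integral_bound_real[where B="M / (t * c\<^sup>2)", OF _ finite.emptyI integrable_integral[OF R_int]]
      R_bound ab t by simp
  then have "norm (integral {a..b} E) \<le> 1 / (t * c) + 1 / (t * c) + M / (t * c\<^sup>2) * (b - a)"
    unfolding integral_E using ab F_bound[of a] F_bound[of b]
      norm_triangle_ineq4[of "F b - F a"] norm_triangle_ineq4[of "F b" "F a"]
    by (smt (verit) atLeastAtMost_iff)
  also have "\<dots> = (2 / c + M * (b - a) / c\<^sup>2) / t"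
    using t c by (simp add: field_simps power2_eq_square)
  finally show ?thesis unfolding E_def .
qed

lemma sin_le_on_arc:
  fixes \<theta> :: real
  assumes "-2*pi/3 \<le> \<theta>" "\<theta> \<le> -pi/3"
  shows "sin \<theta> \<le> -3/4"
proof -
  have arc: "\<bar>\<theta> + pi/2\<bar> \<le> pi/6"
    using assms by linarith
  have "sqrt 3 / 2 = cos (pi/6)"
    by (simp add: cos_30)
  also have "\<dots> \<le> cos \<bar>\<theta> + pi/2\<bar>"
    using arc by (intro cos_monotone_0_pi_le) auto
  also have "\<dots> = - sin \<theta>"
    by (simp add: cos_add)
  finally have "sqrt 3 / 2 \<le> - sin \<theta>" .
  moreover have "3/2 \<le> sqrt 3"
    by (rule real_le_rsqrt) (simp add: power2_eq_square)
  ultimately show ?thesis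
    by linarith
qed

lemma arc_eq_interval: "{\<theta>::real. \<bar>\<theta> + pi/2\<bar> \<le> pi/6} = {-2*pi/3..-pi/3}"
  unfolding set_eq_iff mem_Collect_eq atLeastAtMost_iff abs_le_iff by (intro allI iffI; linarith)

definition arc_coeff :: "real \<Rightarrow> nat \<Rightarrow> complex" where
  "arc_coeff t j = integral {-2*pi/3..-pi/3}
     (\<lambda>\<theta>. exp (- \<i> * of_real (t * (2 - 2 * cos \<theta>))) * cnj (exp (\<i> * of_nat j * of_real \<theta>)))"

lemma Kmat_eq_arc_coeff:
  assumes "t > 0"
  shows "Kmat t n k = arc_coeff t (nat \<bar>n - k\<bar>)"
proof -
  have "t * phi (real_of_int \<bar>n - k\<bar> / t) \<theta> = t * (2 - 2 * cos \<theta>) + real (nat \<bar>n - k\<bar>) * \<theta>" for \<theta>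
    using assms unfolding phi_def by (simp add: field_simps)
  then have "- \<i> * of_real (t * phi (real_of_int \<bar>n - k\<bar> / t) \<theta>)
      = - \<i> * of_real (t * (2 - 2 * cos \<theta>)) + cnj (\<i> * of_nat (nat \<bar>n - k\<bar>) * of_real \<theta>)" for \<theta>
    by (simp only: of_real_add of_real_mult of_real_of_nat_eq) (simp add: algebra_simps)
  then have "exp (- \<i> * of_real (t * phi (real_of_int \<bar>n - k\<bar> / t) \<theta>))
      = exp (- \<i> * of_real (t * (2 - 2 * cos \<theta>))) * cnj (exp (\<i> * of_nat (nat \<bar>n - k\<bar>) * of_real \<theta>))"
    for \<theta>
    by (simp only: exp_add exp_cnj)
  then show ?thesis
    unfolding Kmat_def arc_coeff_def Let_def arc_eq_interval by simp
qed

lemma Kmat_commute: "Kmat t n k = Kmat t k n"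
  unfolding Kmat_def by (simp add: abs_minus_commute)

lemma sum_arc_coeff_le:
  assumes "finite J"
  shows "(\<Sum>j\<in>J. (cmod (arc_coeff t j))\<^sup>2) \<le> 11"
proof -
  have "(\<Sum>j\<in>J. (cmod (arc_coeff t j))\<^sup>2) \<le> 2 * pi * (-pi/3 - (-2*pi/3))"
    unfolding arc_coeff_def
    using pi_gt_zero by (intro bessel_inequality_interval[OF assms] continuous_intros) (linarith | simp)+
  also have "\<dots> = 2/3 * pi\<^sup>2"
    by (simp add: field_simps power2_eq_square)
  also have "\<dots> \<le> 2/3 * 4\<^sup>2"
    using pi_less_4 by (intro mult_left_mono power_mono) auto
  finally show ?thesis
    by simp
qed

lemma sum_nat_abs_diff_le:
  fixes h :: "nat \<Rightarrow> real"
  assumes bound: "\<And>J. finite J \<Longrightarrow> sum h J \<le> M" and A: "finite A"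
  shows "(\<Sum>n\<in>A. h (nat \<bar>n - k\<bar>)) \<le> 2 * M"
proof -
  let ?d = "\<lambda>n::int. nat \<bar>n - k\<bar>"
  have "(\<Sum>n\<in>B. h (?d n)) \<le> M" if "B \<subseteq> A" "inj_on ?d B" for B
    using sum.reindex[OF that(2), of h] bound[of "?d ` B"] finite_subset[OF that(1) A] by simp
  moreover have "inj_on ?d (A \<inter> {k..})" "inj_on ?d (A - {k..})"
    by (auto simp: inj_on_def)
  ultimately have "(\<Sum>n\<in>A \<inter> {k..}. h (?d n)) \<le> M" "(\<Sum>n\<in>A - {k..}. h (?d n)) \<le> M"
    by (meson Diff_subset inf_le1)+
  then show ?thesis
    using sum.Int_Diff[OF A, of "\<lambda>n. h (?d n)" "{k..}"] by linarith
qed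

lemma sum_Kmat_row_le:
  assumes "t > 0" "finite A"
  shows "(\<Sum>k\<in>A. (cmod (Kmat t n k))\<^sup>2) \<le> 22"
proof -
  have "(\<Sum>k\<in>A. (cmod (arc_coeff t (nat \<bar>k - n\<bar>)))\<^sup>2) \<le> 2 * 11"
    by (rule sum_nat_abs_diff_le[OF sum_arc_coeff_le assms(2)])
  then show ?thesis
    unfolding Kmat_eq_arc_coeff[OF assms(1)] by (simp add: abs_minus_commute)
qed

lemma norm_Kmat_le:
  assumes t: "t \<ge> 1" and nk: "real_of_int \<bar>n - k\<bar> \<le> t/2"
  shows "cmod (Kmat t n k) \<le> 5/t"
proof -
  define v where "v = real_of_int \<bar>n - k\<bar> / t"
  have v: "0 \<le> v" "v \<le> 1/2"
    unfolding v_def using t nk by (auto simp: field_simps)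
  have "cmod (integral {-2*pi/3..-pi/3} (\<lambda>\<theta>. exp (\<i> * of_real (t * - phi v \<theta>))))
      \<le> (2 / 1 + 2 * (-pi/3 - -2*pi/3) / 1\<^sup>2) / t"
  proof (rule oscillatory_integral_bound)
    fix \<theta> assume "\<theta> \<in> {-2*pi/3..-pi/3}"
    then have "2 * sin \<theta> + v \<le> -1"
      using sin_le_on_arc[of \<theta>] v by auto
    then show "1 \<le> \<bar>- (2 * sin \<theta> + v)\<bar>"
      by linarith
  qed (use t in \<open>auto intro!: derivative_eq_intros continuous_intros simp: phi_def abs_mult\<close>)
  also have "\<dots> \<le> 5/t"
    using pi_less_4 t by (simp add: divide_right_mono)
  finally show ?thesis
    unfolding Kmat_def Let_def arc_eq_interval v_def by simp
qed

definition weight :: "real \<Rightarrow> int \<Rightarrow> real" where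
  "weight \<sigma> n = 1 / (1 + real_of_int \<bar>n\<bar>) powr (2 * \<sigma>)"

lemma weight_nonneg: "0 \<le> weight \<sigma> n"
  unfolding weight_def by simp

lemma weight_le_inverse:
  assumes "\<sigma> \<ge> 1/2"
  shows "weight \<sigma> n \<le> 1 / (1 + real_of_int \<bar>n\<bar>)"
proof -
  have "(1 + real_of_int \<bar>n\<bar>) powr 1 \<le> (1 + real_of_int \<bar>n\<bar>) powr (2 * \<sigma>)"
    using assms by (intro powr_mono) auto
  then show ?thesis
    unfolding weight_def by (intro divide_left_mono) auto
qed

lemma weight_le_one:
  assumes "\<sigma> \<ge> 1/2"
  shows "weight \<sigma> n \<le> 1"
  using weight_le_inverse[OF assms, of n] by (simp add: order_trans)

lemma sum_weight_le:
  assumes "\<sigma> > 1/2" and "finite A"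
  shows "(\<Sum>n\<in>A. weight \<sigma> n) \<le> 2 * (\<Sum>j. 1 / (1 + real j) powr (2 * \<sigma>))"
proof -
  define h where "h j = 1 / (1 + real j) powr (2 * \<sigma>)" for j :: nat
  have "summable (\<lambda>j::nat. real j powr (- (2 * \<sigma>)))"
    using assms(1) by (subst summable_real_powr_iff) simp
  moreover have h_Suc: "h j = real (Suc j) powr (- (2 * \<sigma>))" for j
    unfolding h_def by (simp add: powr_minus_divide add.commute)
  ultimately have "summable h"
    unfolding h_Suc by (subst summable_Suc_iff)
  then have "sum h J \<le> suminf h" if "finite J" for J
    using that by (rule sum_le_suminf) (simp add: h_def)
  from sum_nat_abs_diff_le[OF this assms(2), of 0] show ?thesis
    unfolding h_def weight_def by simp
qed

lemma weight_mult_le: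
  assumes "\<sigma> \<ge> 1/2" and "t > 0" and "t/4 < real_of_int \<bar>n\<bar>"
  shows "weight \<sigma> n * weight \<sigma> k \<le> 4/t * weight \<sigma> k"
proof -
  have "weight \<sigma> n \<le> 1 / (1 + real_of_int \<bar>n\<bar>)"
    by (rule weight_le_inverse[OF assms(1)])
  also have "\<dots> \<le> 4/t"
    using assms(2,3) by (simp add: field_simps)
  finally show ?thesis
    using weight_nonneg[of \<sigma> k] by (intro mult_right_mono) auto
qed

lemma sum_kernel_weight_le:
  fixes a :: "'a \<Rightarrow> 'a \<Rightarrow> real"
  assumes "\<And>n. 0 \<le> w n"
    and row: "\<And>n. (\<Sum>k\<in>A. a n k) \<le> B" and col: "\<And>k. (\<Sum>n\<in>A. a n k) \<le> B"
  shows "(\<Sum>n\<in>A. \<Sum>k\<in>A. a n k * (w n + w k)) \<le> 2 * B * (\<Sum>n\<in>A. w n)"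
proof -
  have "(\<Sum>n\<in>A. \<Sum>k\<in>A. a n k * (w n + w k))
      = (\<Sum>n\<in>A. w n * (\<Sum>k\<in>A. a n k)) + (\<Sum>k\<in>A. w k * (\<Sum>n\<in>A. a n k))"
    by (simp add: sum.distrib sum_distrib_left sum.swap[of "\<lambda>n k. w k * a n k"] algebra_simps)
  also have "\<dots> \<le> (\<Sum>n\<in>A. w n * B) + (\<Sum>k\<in>A. w k * B)"
    using assms by (intro add_mono sum_mono mult_left_mono) auto
  also have "\<dots> = 2 * B * (\<Sum>n\<in>A. w n)"
    by (simp add: sum_distrib_right[symmetric])
  finally show ?thesis .
qed

lemma wterm_eq: "wterm \<sigma> t (n, k) = (cmod (Kmat t n k))\<^sup>2 * (weight \<sigma> n * weight \<sigma> k)"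
  unfolding wterm_def weight_def by simp

lemma wterm_le:
  assumes \<sigma>: "\<sigma> \<ge> 1/2" and t: "t \<ge> 1"
  shows "wterm \<sigma> t (n, k) \<le> 25/t * (weight \<sigma> n * weight \<sigma> k)
           + 4/t * ((cmod (Kmat t n k))\<^sup>2 * (weight \<sigma> n + weight \<sigma> k))"
proof (cases "real_of_int \<bar>n - k\<bar> \<le> t/2")
  case True
  have "(cmod (Kmat t n k))\<^sup>2 \<le> (5/t)\<^sup>2"
    using norm_Kmat_le[OF t True] by (intro power_mono) auto
  also have "\<dots> \<le> 25/t"
    using t by (simp add: power2_eq_square field_simps)
  finally have "wterm \<sigma> t (n, k) \<le> 25/t * (weight \<sigma> n * weight \<sigma> k)"
    unfolding wterm_eq using weight_nonneg[of \<sigma>] by (intro mult_right_mono) auto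
  moreover have "0 \<le> 4/t * ((cmod (Kmat t n k))\<^sup>2 * (weight \<sigma> n + weight \<sigma> k))"
    using t weight_nonneg[of \<sigma>] by (intro mult_nonneg_nonneg add_nonneg_nonneg) auto
  ultimately show ?thesis
    by linarith
next
  case False
  then have "t/4 < real_of_int \<bar>n\<bar> \<or> t/4 < real_of_int \<bar>k\<bar>"
    by linarith
  then have "weight \<sigma> n * weight \<sigma> k \<le> 4/t * weight \<sigma> k
      \<or> weight \<sigma> k * weight \<sigma> n \<le> 4/t * weight \<sigma> n"
    using weight_mult_le[OF \<sigma>, of t] t by auto
  moreover have "0 \<le> 4/t * weight \<sigma> n" "0 \<le> 4/t * weight \<sigma> k"
    using t weight_nonneg[of \<sigma>] by simp_all
  ultimately have "weight \<sigma> n * weight \<sigma> k \<le> 4/t * (weight \<sigma> n + weight \<sigma> k)"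
    unfolding distrib_left mult.commute[of "weight \<sigma> k" "weight \<sigma> n"] by linarith
  then have "wterm \<sigma> t (n, k) \<le> (cmod (Kmat t n k))\<^sup>2 * (4/t * (weight \<sigma> n + weight \<sigma> k))"
    unfolding wterm_eq by (rule mult_left_mono) simp
  then have "wterm \<sigma> t (n, k) \<le> 4/t * ((cmod (Kmat t n k))\<^sup>2 * (weight \<sigma> n + weight \<sigma> k))"
    by (simp only: mult.left_commute)
  moreover have "0 \<le> 25/t * (weight \<sigma> n * weight \<sigma> k)"
    using t weight_nonneg[of \<sigma>] by simp
  ultimately show ?thesis
    by linarith
qed

lemma sum_wterm_le:
  assumes \<sigma>: "\<sigma> \<ge> 1/2" and t: "t \<ge> 1" and S: "\<And>A. finite A \<Longrightarrow> (\<Sum>n\<in>A. weight \<sigma> n) \<le> S"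
    and F: "finite F"
  shows "sum (wterm \<sigma> t) F \<le> (25 * S\<^sup>2 + 176 * S) / t"
proof -
  define A where "A = fst ` F \<union> snd ` F"
  have A: "finite A" "F \<subseteq> A \<times> A"
    unfolding A_def using F by force+
  define W where "W = (\<Sum>n\<in>A. weight \<sigma> n)"
  have W: "0 \<le> W" "W \<le> S"
    unfolding W_def using S[OF A(1)] weight_nonneg[of \<sigma>] by (auto intro: sum_nonneg)
  have "sum (wterm \<sigma> t) F \<le> sum (wterm \<sigma> t) (A \<times> A)"
    using A by (intro sum_mono2) (auto simp: wterm_def)
  also have "\<dots> = (\<Sum>n\<in>A. \<Sum>k\<in>A. wterm \<sigma> t (n, k))"
    by (simp add: sum.cartesian_product)
  also have "\<dots> \<le> (\<Sum>n\<in>A. \<Sum>k\<in>A. 25/t * (weight \<sigma> n * weight \<sigma> k)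
                     + 4/t * ((cmod (Kmat t n k))\<^sup>2 * (weight \<sigma> n + weight \<sigma> k)))"
    by (intro sum_mono wterm_le[OF \<sigma> t])
  also have "\<dots> = 25/t * (\<Sum>n\<in>A. \<Sum>k\<in>A. weight \<sigma> n * weight \<sigma> k)
      + 4/t * (\<Sum>n\<in>A. \<Sum>k\<in>A. (cmod (Kmat t n k))\<^sup>2 * (weight \<sigma> n + weight \<sigma> k))"
    by (simp add: sum.distrib sum_distrib_left)
  also have "\<dots> = 25/t * W\<^sup>2
      + 4/t * (\<Sum>n\<in>A. \<Sum>k\<in>A. (cmod (Kmat t n k))\<^sup>2 * (weight \<sigma> n + weight \<sigma> k))"
    by (simp only: W_def power2_eq_square sum_product)
  also have "\<dots> \<le> 25/t * W\<^sup>2 + 4/t * (2 * 22 * W)"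
    unfolding W_def using t sum_Kmat_row_le[OF _ A(1), of t] Kmat_commute weight_nonneg[of \<sigma>]
    by (intro add_left_mono mult_left_mono sum_kernel_weight_le) auto
  also have "\<dots> = (25 * W\<^sup>2 + 176 * W) / t"
    by (simp add: add_divide_distrib)
  also have "\<dots> \<le> (25 * S\<^sup>2 + 176 * S) / t"
    using W t by (intro divide_right_mono add_mono mult_left_mono power_mono) auto
  finally show ?thesis .
qed

theorem lemma2p2:
  fixes \<sigma> :: real
  assumes "\<sigma> > 1/2"
  shows "\<exists>C>0. \<forall>t\<ge>1. wterm \<sigma> t summable_on UNIV \<and>
           (\<Sum>\<^sub>\<infinity>nk\<in>UNIV. wterm \<sigma> t nk) \<le> C / t"
proof -
  define S where "S = 2 * (\<Sum>j. 1 / (1 + real j) powr (2 * \<sigma>))"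
  have S: "\<And>A. finite A \<Longrightarrow> (\<Sum>n\<in>A. weight \<sigma> n) \<le> S"
    unfolding S_def using sum_weight_le[OF assms] .
  have "0 \<le> S"
    using S[of "{}"] by simp
  define C where "C = 25 * S\<^sup>2 + 176 * S + 1"
  have "C > 0"
    unfolding C_def using \<open>0 \<le> S\<close> by (simp add: add_nonneg_pos)
  moreover have "wterm \<sigma> t summable_on UNIV \<and> (\<Sum>\<^sub>\<infinity>nk\<in>UNIV. wterm \<sigma> t nk) \<le> C / t" if t: "t \<ge> 1" for t
  proof -
    have finite_sums: "sum (wterm \<sigma> t) F \<le> C / t" if "finite F" for F
      using assms t
      by (intro order_trans[OF sum_wterm_le[OF _ t S that]]) (auto simp: C_def intro!: divide_right_mono)
    have summable: "wterm \<sigma> t summable_on UNIV"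
      using finite_sums
      by (intro nonneg_bdd_above_summable_on bdd_aboveI[where M="C / t"]) (auto simp: wterm_def)
    show ?thesis
      using summable infsum_le_finite_sums[OF summable finite_sums] by blast
  qed
  ultimately show ?thesis
    by blast
qed

end
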